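(* Let $(\mathcal G_A,p^A)$ and $(\mathcal G_B,p^B)$ be CPS's on the finite set $\Omega$ (satisfying the standing assumptions), each satisfying certainty reflection and being $1$-closed. Fix an event $E$ and a state $\omega$ with $\omega\in E$. If $E$ is common certainty at $\omega$ (i.e., $\omega\in C^\infty$ computed with $q_A=q_B=1$), then $E$ is common knowledge at $\omega$ (i.e., $\omega\in K^\infty$ computed with $q_A=q_B=1$).
   Context: $\Omega$ is a finite set; every subset is an event. A CPS is a pair $(\mathcal G,p)$ where $\mathcal G$ is a family of nonempty subsets of $\Omega$ and $p$ assigns to each $G\in\mathcal G$ a probability measure $p_G$ on $\Omega$ with $p_G(G)=1$ and $p_G(E)=p_G(F)p_F(E)$ whenever $E\subseteq F\subseteq G$, $F,G\in\mathcal G$. Standing assumption: each conditioning family is closed under unions and nonempty intersections and covers $\Omega$. Atom: $m_i(\omega)=\bigcap\{G\in\mathcal G_i:\omega\in G\}$. $(\mathcal G_i,p^i)$ is $1$-closed if every $L\subseteq G$ with $G\in\mathcal G_i$ and $p^i_G(L)=1$ belongs to $\mathcal G_i$. Certainty reflection: for every event $E$, $q\in[0,1]$, $\omega$: $p^i_{m_i(\omega)}(E)=q$ implies $p^i_{m_i(\omega)}(\{\omega':p^i_{m_i(\omega')}(E)=q\})=1$. $C_i(F)=\{\omega:p^i_{m_i(\omega)}(F)=1\}$ and $K_i(F)=\{\omega: m_i(\omega)\subseteq F\}$. With $q_A=q_B=1$: $A^0=\{\omega:p^A_{m_A(\omega)}(E)=1\}$, $B^0=\{\omega:p^B_{m_B(\omega)}(E)=1\}$;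 $A^{n+1}=A^n\cap C_A(B^n)$, $B^{n+1}=B^n\cap C_B(A^n)$, $C^\infty=\bigcap_nA^n\cap\bigcap_nB^n$; and $A^{K,0}=A^0$, $B^{K,0}=B^0$, $A^{K,n+1}=A^{K,n}\cap K_A(B^{K,n})$, $B^{K,n+1}=B^{K,n}\cap K_B(A^{K,n})$, $K^\infty=\bigcap_nA^{K,n}\cap\bigcap_nB^{K,n}$. *)

theory Defs
  imports "HOL-Probability.Probability"
begin

text \<open>The finite state space \<Omega> is the universe of a finite type 'w; every subset is an event.
  A probability measure on \<Omega> is a pmf; p G is the measure p_G.\<close>

definition cprob :: "('w set \<Rightarrow> 'w pmf) \<Rightarrow> 'w set \<Rightarrow> 'w set \<Rightarrow> real" where
  "cprob p G E = measure_pmf.prob (p G) E"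

definition is_cps :: "'w set set \<Rightarrow> ('w set \<Rightarrow> 'w pmf) \<Rightarrow> bool" where
  "is_cps \<G> p \<longleftrightarrow>
     (\<forall>G\<in>\<G>. G \<noteq> {}) \<and>
     (\<forall>G\<in>\<G>. cprob p G G = 1) \<and>
     (\<forall>E F G. E \<subseteq> F \<longrightarrow> F \<subseteq> G \<longrightarrow> F \<in> \<G> \<longrightarrow> G \<in> \<G> \<longrightarrow>
        cprob p G E = cprob p G F * cprob p F E)"

text \<open>Standing assumption: closed under unions and nonempty intersections, covers \<Omega>
  (binary closure suffices since \<Omega> is finite).\<close>
definition standing :: "'w set set \<Rightarrow> bool" where
  "standing \<G> \<longleftrightarrow>
     (\<forall>F\<in>\<G>. \<forall>G\<in>\<G>. F \<union> G \<in> \<G>) \<and>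
     (\<forall>F\<in>\<G>. \<forall>G\<in>\<G>. F \<inter> G \<noteq> {} \<longrightarrow> F \<inter> G \<in> \<G>) \<and>
     \<Union>\<G> = UNIV"

definition atom :: "'w set set \<Rightarrow> 'w \<Rightarrow> 'w set" where
  "atom \<G> \<omega> = \<Inter>{G\<in>\<G>. \<omega> \<in> G}"

definition one_closed :: "'w set set \<Rightarrow> ('w set \<Rightarrow> 'w pmf) \<Rightarrow> bool" where
  "one_closed \<G> p \<longleftrightarrow> (\<forall>G\<in>\<G>. \<forall>L. L \<subseteq> G \<longrightarrow> cprob p G L = 1 \<longrightarrow> L \<in> \<G>)"

definition certainty_reflection :: "'w set set \<Rightarrow> ('w set \<Rightarrow> 'w pmf) \<Rightarrow> bool" where
  "certainty_reflection \<G> p \<longleftrightarrow>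
     (\<forall>E q \<omega>. 0 \<le> q \<longrightarrow> q \<le> 1 \<longrightarrow> cprob p (atom \<G> \<omega>) E = q \<longrightarrow>
        cprob p (atom \<G> \<omega>) {\<omega>'. cprob p (atom \<G> \<omega>') E = q} = 1)"

definition Cert :: "'w set set \<Rightarrow> ('w set \<Rightarrow> 'w pmf) \<Rightarrow> 'w set \<Rightarrow> 'w set" where
  "Cert \<G> p F = {\<omega>. cprob p (atom \<G> \<omega>) F = 1}"

definition Know :: "'w set set \<Rightarrow> 'w set \<Rightarrow> 'w set" where
  "Know \<G> F = {\<omega>. atom \<G> \<omega> \<subseteq> F}"

primrec iter :: "('w set \<Rightarrow> 'w set) \<Rightarrow> ('w set \<Rightarrow> 'w set) \<Rightarrow> 'w set \<Rightarrow> 'w set \<Rightarrow> nat \<Rightarrow> 'w set \<times> 'w set" where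
  "iter OpA OpB A0 B0 0 = (A0, B0)"
| "iter OpA OpB A0 B0 (Suc n) =
     (fst (iter OpA OpB A0 B0 n) \<inter> OpA (snd (iter OpA OpB A0 B0 n)),
      snd (iter OpA OpB A0 B0 n) \<inter> OpB (fst (iter OpA OpB A0 B0 n)))"

definition limit_set :: "('w set \<Rightarrow> 'w set) \<Rightarrow> ('w set \<Rightarrow> 'w set) \<Rightarrow> 'w set \<Rightarrow> 'w set \<Rightarrow> 'w set" where
  "limit_set OpA OpB A0 B0 =
     (\<Inter>n. fst (iter OpA OpB A0 B0 n)) \<inter> (\<Inter>n. snd (iter OpA OpB A0 B0 n))"

definition C_inf :: "'w set set \<Rightarrow> ('w set \<Rightarrow> 'w pmf) \<Rightarrow> 'w set set \<Rightarrow> ('w set \<Rightarrow> 'w pmf) \<Rightarrow> 'w set \<Rightarrow> 'w set" where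
  "C_inf GA pA GB pB E =
     limit_set (Cert GA pA) (Cert GB pB) (Cert GA pA E) (Cert GB pB E)"

definition K_inf :: "'w set set \<Rightarrow> ('w set \<Rightarrow> 'w pmf) \<Rightarrow> 'w set set \<Rightarrow> ('w set \<Rightarrow> 'w pmf) \<Rightarrow> 'w set \<Rightarrow> 'w set" where
  "K_inf GA pA GB pB E =
     limit_set (Know GA) (Know GB) (Cert GA pA E) (Cert GB pB E)"

end

theory Submission
  imports Defs
begin

text \<open>With 1-closedness, being certain of a true event amounts to knowing it: if \<omega> \<in> F and
  p_{m(\<omega>)}(F) = 1, then m(\<omega>) \<inter> F has conditional probability 1 given the atom m(\<omega>), so it is
  a conditioning event containing \<omega> and therefore contains m(\<omega>).
  Certainty reflection makes every A^n self-certain (A^n \<subseteq> C_A(A^n)), and similarly for B^n.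
  Hence at a state of Z = E \<inter> C^\<infinity> agent A is certain of E, of every A^n and (as the state
  lies in A^{n+1}) of every B^n, all of which are true there; so the A-atom of the state
  lies in Z, and likewise for B. A set contained in A^0 \<inter> B^0 that contains the atoms of
  both agents at each of its states is contained in every step of the knowledge iteration.\<close>

lemma cprob_Int_eq_1:
  "cprob p G A = 1 \<Longrightarrow> cprob p G B = 1 \<Longrightarrow> cprob p G (A \<inter> B) = 1"
  unfolding cprob_def by (simp add: measure_pmf.measure_space_inter)

lemma standing_Inter_mem:
  assumes "standing \<G>" and "finite S" "S \<noteq> {}" "S \<subseteq> \<G>" "\<forall>G\<in>S. y \<in> G"
  shows "\<Inter>S \<in> \<G>"
  using assms(2-5)
proof (induction S rule: finite_ne_induct)
  case (singleton G)
  then show ?case by simp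
next
  case (insert G S)
  then have "\<Inter>S \<in> \<G>" "G \<in> \<G>" "G \<inter> \<Inter>S \<noteq> {}" by auto
  with \<open>standing \<G>\<close> show ?case
    unfolding standing_def by simp
qed

lemma mem_atom: "y \<in> atom \<G> y"
  unfolding atom_def by auto

lemma atom_subset: "G \<in> \<G> \<Longrightarrow> y \<in> G \<Longrightarrow> atom \<G> y \<subseteq> G"
  unfolding atom_def by auto

lemma atom_mem:
  fixes \<G> :: "'w::finite set set"
  assumes "standing \<G>"
  shows "atom \<G> y \<in> \<G>"
proof -
  have "y \<in> \<Union>\<G>"
    using assms unfolding standing_def by auto
  then show ?thesis
    unfolding atom_def by (intro standing_Inter_mem[OF assms]) auto
qed

lemma Int_Cert_subset_Know:
  fixes \<G> :: "'w::finite set set"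
  assumes "is_cps \<G> p" "standing \<G>" "one_closed \<G> p"
  shows "F \<inter> Cert \<G> p F \<subseteq> Know \<G> F"
proof
  fix y
  assume y: "y \<in> F \<inter> Cert \<G> p F"
  have atom: "atom \<G> y \<in> \<G>"
    using atom_mem[OF assms(2)] .
  then have "cprob p (atom \<G> y) (atom \<G> y) = 1"
    using assms(1) unfolding is_cps_def by simp
  moreover have "cprob p (atom \<G> y) F = 1"
    using y unfolding Cert_def by simp
  ultimately have "cprob p (atom \<G> y) (atom \<G> y \<inter> F) = 1"
    by (rule cprob_Int_eq_1)
  with atom assms(3) have "atom \<G> y \<inter> F \<in> \<G>"
    unfolding one_closed_def by blast
  moreover have "y \<in> atom \<G> y \<inter> F"
    using y mem_atom by simp
  ultimately have "atom \<G> y \<subseteq> atom \<G> y \<inter> F"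
    by (rule atom_subset)
  then show "y \<in> Know \<G> F"
    unfolding Know_def by auto
qed

lemma mono_Know: "mono (Know \<G>)"
  unfolding Know_def by (rule monoI) auto

lemma Cert_Int_subset: "Cert \<G> p X \<inter> Cert \<G> p Y \<subseteq> Cert \<G> p (X \<inter> Y)"
  unfolding Cert_def using cprob_Int_eq_1 by blast

lemma Cert_subset_Cert_Cert:
  "certainty_reflection \<G> p \<Longrightarrow> Cert \<G> p X \<subseteq> Cert \<G> p (Cert \<G> p X)"
  unfolding certainty_reflection_def Cert_def by auto

lemma Int_Cert_subset_Cert_Int_Cert:
  assumes "certainty_reflection \<G> p" and "X \<subseteq> Cert \<G> p X"
  shows "X \<inter> Cert \<G> p Y \<subseteq> Cert \<G> p (X \<inter> Cert \<G> p Y)"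
proof -
  have "X \<inter> Cert \<G> p Y \<subseteq> Cert \<G> p X \<inter> Cert \<G> p (Cert \<G> p Y)"
    using assms Cert_subset_Cert_Cert by blast
  also have "\<dots> \<subseteq> Cert \<G> p (X \<inter> Cert \<G> p Y)"
    by (rule Cert_Int_subset)
  finally show ?thesis .
qed

lemma iter_swap: "iter OpB OpA B0 A0 n = prod.swap (iter OpA OpB A0 B0 n)"
  by (induction n) simp_all

lemma limit_set_swap: "limit_set OpB OpA B0 A0 = limit_set OpA OpB A0 B0"
  unfolding limit_set_def iter_swap[of OpB OpA B0 A0] by auto

lemma mem_limit_set_iff:
  "y \<in> limit_set OpA OpB A0 B0 \<longleftrightarrow>
     (\<forall>n. y \<in> fst (iter OpA OpB A0 B0 n) \<and> y \<in> snd (iter OpA OpB A0 B0 n))"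
  unfolding limit_set_def by auto

lemma limit_set_subset_init: "limit_set OpA OpB A0 B0 \<subseteq> A0 \<inter> B0"
proof -
  have "limit_set OpA OpB A0 B0 \<subseteq> fst (iter OpA OpB A0 B0 0) \<inter> snd (iter OpA OpB A0 B0 0)"
    unfolding limit_set_def by blast
  then show ?thesis by simp
qed

lemma subset_limit_set:
  assumes "mono OpA" "mono OpB" "Z \<subseteq> A0" "Z \<subseteq> B0" "Z \<subseteq> OpA Z" "Z \<subseteq> OpB Z"
  shows "Z \<subseteq> limit_set OpA OpB A0 B0"
proof -
  have "Z \<subseteq> fst (iter OpA OpB A0 B0 n) \<and> Z \<subseteq> snd (iter OpA OpB A0 B0 n)" for n
  proof (induction n)
    case 0
    then show ?case using assms(3,4) by simp
  next
    case (Suc n)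
    then have "Z \<subseteq> OpA (snd (iter OpA OpB A0 B0 n))" "Z \<subseteq> OpB (fst (iter OpA OpB A0 B0 n))"
      using assms(1,2,5,6) by (meson monoD order_trans)+
    with Suc show ?case by simp
  qed
  then show ?thesis
    unfolding limit_set_def by blast
qed

lemma iter_Cert_self_certain:
  assumes "certainty_reflection \<G> p"
  shows "fst (iter (Cert \<G> p) OpB (Cert \<G> p E) B0 n)
           \<subseteq> Cert \<G> p (fst (iter (Cert \<G> p) OpB (Cert \<G> p E) B0 n))"
proof (induction n)
  case 0
  then show ?case using Cert_subset_Cert_Cert[OF assms] by simp
next
  case (Suc n)
  then show ?case using Int_Cert_subset_Cert_Int_Cert[OF assms] by simp
qed

lemma Int_limit_set_Cert_subset_Know:
  fixes \<G> :: "'w::finite set set" and E B0 :: "'w set" and OpB :: "'w set \<Rightarrow> 'w set"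
  assumes "is_cps \<G> p" "standing \<G>" "one_closed \<G> p" "certainty_reflection \<G> p"
  defines "Z \<equiv> E \<inter> limit_set (Cert \<G> p) OpB (Cert \<G> p E) B0"
  shows "Z \<subseteq> Know \<G> Z"
proof
  let ?A = "\<lambda>n. fst (iter (Cert \<G> p) OpB (Cert \<G> p E) B0 n)"
  let ?B = "\<lambda>n. snd (iter (Cert \<G> p) OpB (Cert \<G> p E) B0 n)"
  have known: "atom \<G> y \<subseteq> F" if "y \<in> F" "y \<in> Cert \<G> p F" for y F
    using Int_Cert_subset_Know[OF assms(1-3)] that unfolding Know_def by blast
  fix y
  assume "y \<in> Z"
  then have y: "y \<in> E" "y \<in> ?A n" "y \<in> ?B n" for n
    by (simp_all add: Z_def mem_limit_set_iff)
  have "atom \<G> y \<subseteq> E"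
    using known y(1) y(2)[of 0] by simp
  moreover have "atom \<G> y \<subseteq> ?A n" for n
    using known y(2) iter_Cert_self_certain[OF assms(4)] by (meson subsetD)
  moreover have "atom \<G> y \<subseteq> ?B n" for n
    using known[of y "?B n"] y(3) y(2)[of "Suc n"] by simp
  ultimately have "atom \<G> y \<subseteq> Z"
    unfolding Z_def limit_set_def by blast
  then show "y \<in> Know \<G> Z"
    unfolding Know_def by simp
qed

theorem theorem4:
  fixes GA GB :: "'w::finite set set"
    and pA pB :: "'w set \<Rightarrow> 'w pmf"
    and E :: "'w set" and \<omega> :: 'w
  assumes "is_cps GA pA" and "standing GA"
    and "certainty_reflection GA pA" and "one_closed GA pA"
    and "is_cps GB pB" and "standing GB"
    and "certainty_reflection GB pB" and "one_closed GB pB"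
    and "\<omega> \<in> E"
    and "\<omega> \<in> C_inf GA pA GB pB E"
  shows "\<omega> \<in> K_inf GA pA GB pB E"
proof -
  define Z where "Z = E \<inter> C_inf GA pA GB pB E"
  have "Z \<subseteq> Know GA Z"
    using Int_limit_set_Cert_subset_Know[OF assms(1,2,4,3)] unfolding Z_def C_inf_def .
  moreover have "Z \<subseteq> Know GB Z"
    using Int_limit_set_Cert_subset_Know[OF assms(5,6,8,7)]
    unfolding Z_def C_inf_def limit_set_swap[of "Cert GB pB"] .
  moreover have "Z \<subseteq> Cert GA pA E" "Z \<subseteq> Cert GB pB E"
    using limit_set_subset_init[of "Cert GA pA" "Cert GB pB" "Cert GA pA E" "Cert GB pB E"]
    unfolding Z_def C_inf_def by blast+
  ultimately have "Z \<subseteq> K_inf GA pA GB pB E"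
    unfolding K_inf_def by (intro subset_limit_set mono_Know)
  moreover have "\<omega> \<in> Z"
    using assms(9,10) by (simp add: Z_def)
  ultimately show ?thesis by blast
qed

end
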